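(* Fix a strategy profile $g=(g^i,g^{-i})$ and a player $i$, and define the strategy $s^i$ of player $i$ by $s^i_t(a^i_t\mid a_{1:t-1},x^i_t)=P^g(A^i_t=a^i_t\mid A_{1:t-1}=a_{1:t-1},X^i_t=x^i_t)$ whenever the conditioning event has positive probability (arbitrary otherwise); this $s^i$ depends on $g$ only through $g^i$. Then for all $t\in\mathcal T$, $x^i_t,x^i_{t+1}\in\mathcal X^i$ and $a_{1:t}\in\mathcal A^t$, $$P^{s^ig^{-i}}(X^i_t=x^i_t,X^i_{t+1}=x^i_{t+1},A_{1:t}=a_{1:t})=P^{g}(X^i_t=x^i_t,X^i_{t+1}=x^i_{t+1},A_{1:t}=a_{1:t}).$$
   Context: Model: players $\mathcal N=\{1,\dots,N\}$, horizon $\mathcal T=\{1,\dots,T\}$, finite type sets $\mathcal X^i$ and action sets $\mathcal A^i$, $\mathcal X=\times_i\mathcal X^i$, $\mathcal A=\times_i\mathcal A^i$. Types evolve as $P(x_1)=\prod_iQ^i_1(x^i_1)$ and $P(x_{t+1}\mid x_{1:t},a_{1:t})=\prod_iQ^i_{t+1}(x^i_{t+1}\mid x^i_t,a_t)$ for known kernels (each may depend on the full action profile). Player $i$ privately observes its own types and all actions are public; a strategy $g^i$ specifies $g^i_t(\cdot\mid a_{1:t-1},x^i_{1:t})\in\mathcal P(\mathcal A^i)$, and a strategy $s^i$ of the restricted form specifies $s^i_t(\cdot\mid a_{1:t-1},x^i_t)$; players randomize independently given their information. $P^g$ denotes probability under profile $g$; $-i$ denotes all players except $i$. *)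

theory Defs
  imports Complex_Main "HOL-Library.FuncSet"
begin

(* Players are 1..N, times are 1..T.
   Xs j / As j are the type / action sets of player j.
   A type profile is an element of profiles N Xs (a function on players, extensional);
   an action profile is an element of profiles N As.
   Histories are lists: a_{1:k} is a list of k action profiles (a_k = as!(k-1)),
   x_{1:k} is a list of k type profiles (x_k = xs!(k-1)).
   Q1 j x          = Q^j_1(x)
   Q j t x a y     = Q^j_t(y | x, a)   (a is the full action profile)
   g j t h xh a    = g^j_t(a | a_{1:t-1} = h, x^j_{1:t} = xh)
   s t h x a       = s^i_t(a | a_{1:t-1} = h, x^i_t = x)  (restricted strategy) *)

definition profiles :: "nat \<Rightarrow> (nat \<Rightarrow> 'b set) \<Rightarrow> (nat \<Rightarrow> 'b) set" where
  "profiles N S = PiE {1..N} S"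

definition traj :: "nat \<Rightarrow> nat \<Rightarrow> (nat \<Rightarrow> 'b set) \<Rightarrow> (nat \<Rightarrow> 'b) list set" where
  "traj N n S = {xs. length xs = n \<and> set xs \<subseteq> profiles N S}"

(* P^g(X_{1:n} = xs, A_{1:n-1} = as), for length xs = n \<ge> 1, length as = n-1 *)
definition pr_x :: "nat \<Rightarrow> (nat \<Rightarrow> 'x \<Rightarrow> real) \<Rightarrow> (nat \<Rightarrow> nat \<Rightarrow> 'x \<Rightarrow> (nat \<Rightarrow> 'a) \<Rightarrow> 'x \<Rightarrow> real)
   \<Rightarrow> (nat \<Rightarrow> nat \<Rightarrow> (nat \<Rightarrow> 'a) list \<Rightarrow> 'x list \<Rightarrow> 'a \<Rightarrow> real)
   \<Rightarrow> nat \<Rightarrow> (nat \<Rightarrow> 'x) list \<Rightarrow> (nat \<Rightarrow> 'a) list \<Rightarrow> real" where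
  "pr_x N Q1 Q g n xs as =
     (\<Prod>j\<in>{1..N}. Q1 j ((xs ! 0) j)) *
     (\<Prod>k\<in>{1..<n}.
        (\<Prod>j\<in>{1..N}. g j k (take (k - 1) as) (map (\<lambda>x. x j) (take k xs)) ((as ! (k - 1)) j)) *
        (\<Prod>j\<in>{1..N}. Q j (k + 1) ((xs ! (k - 1)) j) (as ! (k - 1)) ((xs ! k) j)))"

(* P^g(X_{1:t} = xs, A_{1:t} = as), for length xs = t \<ge> 1, length as = t *)
definition pr_xa :: "nat \<Rightarrow> (nat \<Rightarrow> 'x \<Rightarrow> real) \<Rightarrow> (nat \<Rightarrow> nat \<Rightarrow> 'x \<Rightarrow> (nat \<Rightarrow> 'a) \<Rightarrow> 'x \<Rightarrow> real)
   \<Rightarrow> (nat \<Rightarrow> nat \<Rightarrow> (nat \<Rightarrow> 'a) list \<Rightarrow> 'x list \<Rightarrow> 'a \<Rightarrow> real)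
   \<Rightarrow> nat \<Rightarrow> (nat \<Rightarrow> 'x) list \<Rightarrow> (nat \<Rightarrow> 'a) list \<Rightarrow> real" where
  "pr_xa N Q1 Q g t xs as =
     pr_x N Q1 Q g t xs (take (t - 1) as) *
     (\<Prod>j\<in>{1..N}. g j t (take (t - 1) as) (map (\<lambda>x. x j) xs) ((as ! (t - 1)) j))"

(* P^g(X^i_t = x, X^i_{t+1} = y, A_{1:t} = as) *)
definition prob_next :: "nat \<Rightarrow> (nat \<Rightarrow> 'x set) \<Rightarrow> (nat \<Rightarrow> 'x \<Rightarrow> real) \<Rightarrow> (nat \<Rightarrow> nat \<Rightarrow> 'x \<Rightarrow> (nat \<Rightarrow> 'a) \<Rightarrow> 'x \<Rightarrow> real)
   \<Rightarrow> (nat \<Rightarrow> nat \<Rightarrow> (nat \<Rightarrow> 'a) list \<Rightarrow> 'x list \<Rightarrow> 'a \<Rightarrow> real)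
   \<Rightarrow> nat \<Rightarrow> nat \<Rightarrow> 'x \<Rightarrow> 'x \<Rightarrow> (nat \<Rightarrow> 'a) list \<Rightarrow> real" where
  "prob_next N Xs Q1 Q g i t x y as =
     (\<Sum>xs\<in>{xs \<in> traj N (t + 1) Xs. (xs ! (t - 1)) i = x \<and> (xs ! t) i = y}. pr_x N Q1 Q g (t + 1) xs as)"

(* P^g(A^i_t = a, A_{1:t-1} = h, X^i_t = x) *)
definition cond_num :: "nat \<Rightarrow> (nat \<Rightarrow> 'x set) \<Rightarrow> (nat \<Rightarrow> 'a set) \<Rightarrow> (nat \<Rightarrow> 'x \<Rightarrow> real) \<Rightarrow> (nat \<Rightarrow> nat \<Rightarrow> 'x \<Rightarrow> (nat \<Rightarrow> 'a) \<Rightarrow> 'x \<Rightarrow> real)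
   \<Rightarrow> (nat \<Rightarrow> nat \<Rightarrow> (nat \<Rightarrow> 'a) list \<Rightarrow> 'x list \<Rightarrow> 'a \<Rightarrow> real)
   \<Rightarrow> nat \<Rightarrow> nat \<Rightarrow> (nat \<Rightarrow> 'a) list \<Rightarrow> 'x \<Rightarrow> 'a \<Rightarrow> real" where
  "cond_num N Xs As Q1 Q g i t h x a =
     (\<Sum>xs\<in>{xs \<in> traj N t Xs. (xs ! (t - 1)) i = x}.
        \<Sum>ap\<in>{ap \<in> profiles N As. ap i = a}. pr_xa N Q1 Q g t xs (h @ [ap]))"

(* P^g(A_{1:t-1} = h, X^i_t = x) *)
definition cond_den :: "nat \<Rightarrow> (nat \<Rightarrow> 'x set) \<Rightarrow> (nat \<Rightarrow> 'x \<Rightarrow> real) \<Rightarrow> (nat \<Rightarrow> nat \<Rightarrow> 'x \<Rightarrow> (nat \<Rightarrow> 'a) \<Rightarrow> 'x \<Rightarrow> real)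
   \<Rightarrow> (nat \<Rightarrow> nat \<Rightarrow> (nat \<Rightarrow> 'a) list \<Rightarrow> 'x list \<Rightarrow> 'a \<Rightarrow> real)
   \<Rightarrow> nat \<Rightarrow> nat \<Rightarrow> (nat \<Rightarrow> 'a) list \<Rightarrow> 'x \<Rightarrow> real" where
  "cond_den N Xs Q1 Q g i t h x =
     (\<Sum>xs\<in>{xs \<in> traj N t Xs. (xs ! (t - 1)) i = x}. pr_x N Q1 Q g t xs h)"

definition kernels :: "nat \<Rightarrow> nat \<Rightarrow> (nat \<Rightarrow> 'x set) \<Rightarrow> (nat \<Rightarrow> 'a set) \<Rightarrow> (nat \<Rightarrow> 'x \<Rightarrow> real)
   \<Rightarrow> (nat \<Rightarrow> nat \<Rightarrow> 'x \<Rightarrow> (nat \<Rightarrow> 'a) \<Rightarrow> 'x \<Rightarrow> real) \<Rightarrow> bool" where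
  "kernels N T Xs As Q1 Q \<longleftrightarrow>
     (\<forall>j\<in>{1..N}. (\<forall>x\<in>Xs j. Q1 j x \<ge> 0) \<and> (\<Sum>x\<in>Xs j. Q1 j x) = 1) \<and>
     (\<forall>j\<in>{1..N}. \<forall>t\<in>{2..T+1}. \<forall>x\<in>Xs j. \<forall>a\<in>profiles N As.
        (\<forall>y\<in>Xs j. Q j t x a y \<ge> 0) \<and> (\<Sum>y\<in>Xs j. Q j t x a y) = 1)"

definition strategy :: "nat \<Rightarrow> nat \<Rightarrow> (nat \<Rightarrow> 'x set) \<Rightarrow> (nat \<Rightarrow> 'a set) \<Rightarrow> nat
   \<Rightarrow> (nat \<Rightarrow> (nat \<Rightarrow> 'a) list \<Rightarrow> 'x list \<Rightarrow> 'a \<Rightarrow> real) \<Rightarrow> bool" where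
  "strategy N T Xs As j gj \<longleftrightarrow>
     (\<forall>t\<in>{1..T}. \<forall>h xh. length h = t - 1 \<and> set h \<subseteq> profiles N As \<and> length xh = t \<and> set xh \<subseteq> Xs j \<longrightarrow>
        (\<forall>a\<in>As j. gj t h xh a \<ge> 0) \<and> (\<Sum>a\<in>As j. gj t h xh a) = 1)"

definition strategy_profile :: "nat \<Rightarrow> nat \<Rightarrow> (nat \<Rightarrow> 'x set) \<Rightarrow> (nat \<Rightarrow> 'a set)
   \<Rightarrow> (nat \<Rightarrow> nat \<Rightarrow> (nat \<Rightarrow> 'a) list \<Rightarrow> 'x list \<Rightarrow> 'a \<Rightarrow> real) \<Rightarrow> bool" where
  "strategy_profile N T Xs As g \<longleftrightarrow> (\<forall>j\<in>{1..N}. strategy N T Xs As j (g j))"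

definition restricted_strategy :: "nat \<Rightarrow> nat \<Rightarrow> (nat \<Rightarrow> 'x set) \<Rightarrow> (nat \<Rightarrow> 'a set) \<Rightarrow> nat
   \<Rightarrow> (nat \<Rightarrow> (nat \<Rightarrow> 'a) list \<Rightarrow> 'x \<Rightarrow> 'a \<Rightarrow> real) \<Rightarrow> bool" where
  "restricted_strategy N T Xs As j s \<longleftrightarrow>
     (\<forall>t\<in>{1..T}. \<forall>h x. length h = t - 1 \<and> set h \<subseteq> profiles N As \<and> x \<in> Xs j \<longrightarrow>
        (\<forall>a\<in>As j. s t h x a \<ge> 0) \<and> (\<Sum>a\<in>As j. s t h x a) = 1)"

definition lift_restricted :: "(nat \<Rightarrow> (nat \<Rightarrow> 'a) list \<Rightarrow> 'x \<Rightarrow> 'a \<Rightarrow> real)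
   \<Rightarrow> nat \<Rightarrow> (nat \<Rightarrow> 'a) list \<Rightarrow> 'x list \<Rightarrow> 'a \<Rightarrow> real" where
  "lift_restricted s = (\<lambda>t h xh a. s t h (last xh) a)"

end

theory Submission
  imports Defs "HOL-Library.NList"
begin

text \<open>
  Types evolve independently across players given the public actions, and players randomize
  independently, so \<open>pr_x\<close> is a product over players of path weights. Summing over type
  trajectories therefore splits every probability that involves only X^i and the actions into a
  factor of player i, which depends on the profile only through g^i, times a factor of the other
  players. The conditional probability defining s^i is a quotient of two factors of player i,
  which gives the first claim.

  For the second claim, induction on t shows that P(A_{1:t-1} = h, X^i_t = x) is the same under g
  and s^i g^{-i}. Given this at time t, the own action factor of s^i is the own weight times s^i,
  which equals the own action factor of g^i wherever the other players' factor is positive; where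
  that factor vanishes it also vanishes at time t+1. Hence the joint laws of
  (X^i_t, X^i_{t+1}, A_{1:t}) agree, and summing over X^i_t gives the marginal at time t+1.
\<close>

type_synonym ('x, 'a) player_strategy = "nat \<Rightarrow> (nat \<Rightarrow> 'a) list \<Rightarrow> 'x list \<Rightarrow> 'a \<Rightarrow> real"
type_synonym ('x, 'a) type_kernel = "nat \<Rightarrow> nat \<Rightarrow> 'x \<Rightarrow> (nat \<Rightarrow> 'a) \<Rightarrow> 'x \<Rightarrow> real"

abbreviation player_path :: "nat \<Rightarrow> (nat \<Rightarrow> 'x) list \<Rightarrow> 'x list" where
  "player_path j xs \<equiv> map (\<lambda>x. x j) xs"

lemma finite_nlists: "finite A \<Longrightarrow> finite (nlists n A)"
  unfolding nlists_def by (rule finite_subset[OF _ finite_lists_length_eq[of A n]]) auto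

lemma traj_eq_nlists: "traj N n S = nlists n (profiles N S)"
  unfolding traj_def nlists_def by (rule refl)

lemma player_path_in_nlists:
  assumes "xs \<in> nlists n (profiles N S)" and "j \<in> {1..N}"
  shows "player_path j xs \<in> nlists n (S j)"
proof (rule nlistsI)
  show "length (player_path j xs) = n" using assms(1) by simp
  show "set (player_path j xs) \<subseteq> S j"
    using nlistsE_set[OF assms(1)] assms(2) by (auto simp: profiles_def PiE_iff)
qed


definition profiles_of_paths :: "nat \<Rightarrow> nat \<Rightarrow> (nat \<Rightarrow> 'x list) \<Rightarrow> (nat \<Rightarrow> 'x) list" where
  "profiles_of_paths N n c = map (\<lambda>k. \<lambda>j\<in>{1..N}. c j ! k) [0..<n]"

lemma length_profiles_of_paths [simp]: "length (profiles_of_paths N n c) = n"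
  by (simp add: profiles_of_paths_def)

lemma nth_profiles_of_paths [simp]: "k < n \<Longrightarrow> profiles_of_paths N n c ! k = (\<lambda>j\<in>{1..N}. c j ! k)"
  by (simp add: profiles_of_paths_def)

lemma bij_betw_player_paths:
  "bij_betw (\<lambda>xs. \<lambda>j\<in>{1..N}. player_path j xs)
     (nlists n (profiles N S)) (PiE {1..N} (\<lambda>j. nlists n (S j)))"
proof (rule bij_betw_byWitness[where f'="profiles_of_paths N n"])
  show "\<forall>xs\<in>nlists n (profiles N S). profiles_of_paths N n (\<lambda>j\<in>{1..N}. player_path j xs) = xs"
  proof
    fix xs assume xs: "xs \<in> nlists n (profiles N S)"
    show "profiles_of_paths N n (\<lambda>j\<in>{1..N}. player_path j xs) = xs"
    proof (rule nth_equalityI)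
      fix k assume "k < length (profiles_of_paths N n (\<lambda>j\<in>{1..N}. player_path j xs))"
      then have k: "k < n" by simp
      have "xs ! k \<in> profiles N S" using xs k by (rule nlistsE_nth_in)
      then show "profiles_of_paths N n (\<lambda>j\<in>{1..N}. player_path j xs) ! k = xs ! k"
        using k xs extensional_restrict[of "xs ! k" "{1..N}"]
        by (simp add: profiles_def PiE_iff cong: restrict_cong)
    qed (use xs in simp)
  qed
  show "\<forall>c\<in>PiE {1..N} (\<lambda>j. nlists n (S j)). (\<lambda>j\<in>{1..N}. player_path j (profiles_of_paths N n c)) = c"
  proof
    fix c assume c: "c \<in> PiE {1..N} (\<lambda>j. nlists n (S j))"
    show "(\<lambda>j\<in>{1..N}. player_path j (profiles_of_paths N n c)) = c"
    proof
      fix j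
      show "(\<lambda>j\<in>{1..N}. player_path j (profiles_of_paths N n c)) j = c j"
      proof (cases "j \<in> {1..N}")
        case True
        then have "length (c j) = n" using c by (metis PiE_E nlistsE_length)
        with True show ?thesis by (intro nth_equalityI) auto
      qed (use c in \<open>auto simp: PiE_iff extensional_def\<close>)
    qed
  qed
  show "(\<lambda>xs. \<lambda>j\<in>{1..N}. player_path j xs) ` nlists n (profiles N S) \<subseteq> PiE {1..N} (\<lambda>j. nlists n (S j))"
    by (intro image_subsetI PiE_I) (auto intro: player_path_in_nlists)
  show "profiles_of_paths N n ` PiE {1..N} (\<lambda>j. nlists n (S j)) \<subseteq> nlists n (profiles N S)"
  proof (intro image_subsetI nlistsI subsetI)
    fix c p assume c: "c \<in> PiE {1..N} (\<lambda>j. nlists n (S j))" and "p \<in> set (profiles_of_paths N n c)"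
    then obtain k where k: "k < n" and p: "p = (\<lambda>j\<in>{1..N}. c j ! k)"
      by (auto simp: in_set_conv_nth)
    have "c j ! k \<in> S j" if "j \<in> {1..N}" for j
      using c that k by (meson PiE_E nlistsE_nth_in)
    then show "p \<in> profiles N S" by (simp add: p profiles_def)
  qed simp
qed

lemma sum_prod_player_paths:
  fixes f :: "nat \<Rightarrow> 'x list \<Rightarrow> 'c :: comm_semiring_1"
  assumes "\<And>j. j \<in> {1..N} \<Longrightarrow> finite (S j)"
  shows "(\<Sum>xs\<in>nlists n (profiles N S). \<Prod>j\<in>{1..N}. f j (player_path j xs))
       = (\<Prod>j\<in>{1..N}. \<Sum>xj\<in>nlists n (S j). f j xj)"
proof -
  have "(\<Prod>j\<in>{1..N}. \<Sum>xj\<in>nlists n (S j). f j xj)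
      = (\<Sum>c\<in>PiE {1..N} (\<lambda>j. nlists n (S j)). \<Prod>j\<in>{1..N}. f j (c j))"
    using assms by (intro prod_sum_PiE) (auto intro: finite_nlists)
  also have "\<dots> = (\<Sum>xs\<in>nlists n (profiles N S). \<Prod>j\<in>{1..N}. f j ((\<lambda>j\<in>{1..N}. player_path j xs) j))"
    by (rule sum.reindex_bij_betw[OF bij_betw_player_paths, symmetric])
  also have "\<dots> = (\<Sum>xs\<in>nlists n (profiles N S). \<Prod>j\<in>{1..N}. f j (player_path j xs))"
    by (intro sum.cong prod.cong) auto
  finally show ?thesis ..
qed

lemma sum_PiE_fixed_coordinate:
  fixes f :: "'i \<Rightarrow> 'b \<Rightarrow> 'c :: comm_semiring_1"
  assumes "finite I" "\<And>j. j \<in> I \<Longrightarrow> finite (B j)" "i \<in> I" "b \<in> B i"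
  shows "(\<Sum>c\<in>{c\<in>PiE I B. c i = b}. \<Prod>j\<in>I. f j (c j)) = f i b * (\<Prod>j\<in>I-{i}. \<Sum>b'\<in>B j. f j b')"
proof -
  have "{c\<in>PiE I B. c i = b} = PiE I (B(i := {b}))"
    using assms(3,4) by (auto simp: PiE_iff extensional_def split: if_split_asm)
  then have "(\<Sum>c\<in>{c\<in>PiE I B. c i = b}. \<Prod>j\<in>I. f j (c j)) = (\<Prod>j\<in>I. \<Sum>b'\<in>(B(i := {b})) j. f j b')"
    using assms by (subst prod_sum_PiE) auto
  also have "\<dots> = f i b * (\<Prod>j\<in>I-{i}. \<Sum>b'\<in>B j. f j b')"
    by (subst prod.remove[OF assms(1,3)]) (simp add: assms(4))
  finally show ?thesis .
qed

definition path_weight :: "(nat \<Rightarrow> 'x \<Rightarrow> real) \<Rightarrow> ('x, 'a) type_kernel \<Rightarrow> ('x, 'a) player_strategy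
    \<Rightarrow> nat \<Rightarrow> nat \<Rightarrow> 'x list \<Rightarrow> (nat \<Rightarrow> 'a) list \<Rightarrow> real"
  where "path_weight Q1 Q gj j n xj as = Q1 j (xj ! 0) *
    (\<Prod>k\<in>{1..<n}. gj k (take (k - 1) as) (take k xj) ((as ! (k - 1)) j)
       * Q j (k + 1) (xj ! (k - 1)) (as ! (k - 1)) (xj ! k))"

lemma pr_x_eq_prod_path_weight:
  assumes "length xs = n" "n \<ge> 1"
  shows "pr_x N Q1 Q g n xs as = (\<Prod>j\<in>{1..N}. path_weight Q1 Q (g j) j n (player_path j xs) as)"
proof -
  have "(\<Prod>j\<in>{1..N}. path_weight Q1 Q (g j) j n (player_path j xs) as)
     = (\<Prod>j\<in>{1..N}. Q1 j ((xs ! 0) j)) *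
       (\<Prod>j\<in>{1..N}. \<Prod>k\<in>{1..<n}.
          g j k (take (k - 1) as) (player_path j (take k xs)) ((as ! (k - 1)) j)
          * Q j (k + 1) ((xs ! (k - 1)) j) (as ! (k - 1)) ((xs ! k) j))"
    unfolding path_weight_def prod.distrib[symmetric] using assms
    by (intro prod.cong refl arg_cong2[where f="(*)"]) (auto simp: take_map)
  also have "(\<Prod>j\<in>{1..N}. \<Prod>k\<in>{1..<n}.
          g j k (take (k - 1) as) (player_path j (take k xs)) ((as ! (k - 1)) j)
          * Q j (k + 1) ((xs ! (k - 1)) j) (as ! (k - 1)) ((xs ! k) j))
     = (\<Prod>k\<in>{1..<n}.
          (\<Prod>j\<in>{1..N}. g j k (take (k - 1) as) (player_path j (take k xs)) ((as ! (k - 1)) j))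
          * (\<Prod>j\<in>{1..N}. Q j (k + 1) ((xs ! (k - 1)) j) (as ! (k - 1)) ((xs ! k) j)))"
    by (subst prod.swap) (simp add: prod.distrib)
  finally show ?thesis by (simp add: pr_x_def)
qed

lemma path_weight_take:
  "n - 1 \<le> m \<Longrightarrow> path_weight Q1 Q gj j n xj (take m as) = path_weight Q1 Q gj j n xj as"
  unfolding path_weight_def by (intro arg_cong2[where f="(*)"] refl prod.cong) (auto simp: min_def)

lemma path_weight_snoc:
  assumes "length xj = n" "n \<ge> 1"
  shows "path_weight Q1 Q gj j (Suc n) (xj @ [z]) as = path_weight Q1 Q gj j n xj as *
     (gj n (take (n - 1) as) xj ((as ! (n - 1)) j) * Q j (n + 1) (xj ! (n - 1)) (as ! (n - 1)) z)"
proof -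
  have "{1..<Suc n} = insert n {1..<n}" using assms by auto
  moreover have "(\<Prod>k\<in>{1..<n}. gj k (take (k - 1) as) (take k (xj @ [z])) ((as ! (k - 1)) j)
        * Q j (k + 1) ((xj @ [z]) ! (k - 1)) (as ! (k - 1)) ((xj @ [z]) ! k))
      = (\<Prod>k\<in>{1..<n}. gj k (take (k - 1) as) (take k xj) ((as ! (k - 1)) j)
        * Q j (k + 1) (xj ! (k - 1)) (as ! (k - 1)) (xj ! k))"
    using assms by (intro prod.cong refl) (auto simp: nth_append)
  ultimately show ?thesis using assms unfolding path_weight_def
    by (simp add: nth_append algebra_simps)
qed

lemma path_weight_nonneg:
  assumes ker: "kernels N T Xs As Q1 Q" and gj: "strategy N T Xs As j gj" and j: "j \<in> {1..N}"
    and xj: "xj \<in> nlists n (Xs j)" and n: "1 \<le> n" "n \<le> T + 1"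
    and as: "n - 1 \<le> length as" "set as \<subseteq> profiles N As"
  shows "path_weight Q1 Q gj j n xj as \<ge> 0"
proof -
  have x_in: "xj ! k \<in> Xs j" if "k < n" for k
    using xj that by (rule nlistsE_nth_in)
  have step_nonneg: "gj k (take (k - 1) as) (take k xj) ((as ! (k - 1)) j)
      * Q j (k + 1) (xj ! (k - 1)) (as ! (k - 1)) (xj ! k) \<ge> 0"
    if k: "k \<in> {1..<n}" for k
  proof -
    have a_k: "as ! (k - 1) \<in> profiles N As" using k as by (auto intro!: nth_mem)
    then have "(as ! (k - 1)) j \<in> As j" using j by (auto simp: profiles_def PiE_iff)
    moreover have "set (take (k - 1) as) \<subseteq> profiles N As" "set (take k xj) \<subseteq> Xs j"
      using as(2) nlistsE_set[OF xj] by (meson set_take_subset subset_trans)+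
    ultimately have "gj k (take (k - 1) as) (take k xj) ((as ! (k - 1)) j) \<ge> 0"
      using gj k n as xj unfolding strategy_def by auto
    moreover have "Q j (k + 1) (xj ! (k - 1)) (as ! (k - 1)) (xj ! k) \<ge> 0"
      using ker j a_k x_in[of "k - 1"] x_in[of k] k n unfolding kernels_def by auto
    ultimately show ?thesis by simp
  qed
  have "Q1 j (xj ! 0) \<ge> 0" using ker j x_in[of 0] n unfolding kernels_def by auto
  then show ?thesis unfolding path_weight_def
    by (rule mult_nonneg_nonneg[OF _ prod_nonneg]) (use step_nonneg in blast)
qed

lemma sum_nlists_Suc_last:
  assumes "y \<in> A"
  shows "(\<Sum>xs\<in>{xs\<in>nlists (Suc n) A. P (take n xs) \<and> xs ! n = y}. f xs)
       = (\<Sum>xs\<in>{xs\<in>nlists n A. P xs}. f (xs @ [y]))"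
proof -
  have "{xs\<in>nlists (Suc n) A. P (take n xs) \<and> xs ! n = y} = (\<lambda>xs. xs @ [y]) ` {xs\<in>nlists n A. P xs}"
  proof (intro equalityI subsetI)
    fix xs assume xs: "xs \<in> {xs\<in>nlists (Suc n) A. P (take n xs) \<and> xs ! n = y}"
    then have "xs \<in> nlists (Suc n) A" by simp
    then have len: "length xs = Suc n" and set: "set xs \<subseteq> A" by (rule nlistsE_length, rule nlistsE_set)
    have "xs = take n xs @ [y]"
      using xs len take_Suc_conv_app_nth[of n xs] by simp
    moreover have "take n xs \<in> nlists n A"
      using len set by (intro nlistsI) (auto dest: in_set_takeD)
    ultimately show "xs \<in> (\<lambda>xs. xs @ [y]) ` {xs\<in>nlists n A. P xs}"
      using xs by (intro image_eqI[where x="take n xs"]) auto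
  next
    fix xs assume "xs \<in> (\<lambda>xs. xs @ [y]) ` {xs\<in>nlists n A. P xs}"
    then obtain ys where xs: "xs = ys @ [y]" and ys: "ys \<in> nlists n A" "P ys" by auto
    have "xs \<in> nlists (Suc n) A"
      using ys(1) assms nlistsE_set[OF ys(1)] unfolding xs by (intro nlistsI) auto
    then show "xs \<in> {xs\<in>nlists (Suc n) A. P (take n xs) \<and> xs ! n = y}"
      using ys unfolding xs by (simp add: nth_append)
  qed
  moreover have "inj_on (\<lambda>xs. xs @ [y]) {xs\<in>nlists n A. P xs}"
    by (rule inj_onI) simp
  ultimately show ?thesis by (simp add: sum.reindex)
qed

lemma cond_den_Suc_0_strategy_independent:
  "cond_den N Xs Q1 Q G i (Suc 0) h x = cond_den N Xs Q1 Q G' i (Suc 0) h x"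
  by (simp add: cond_den_def pr_x_def)

locale game_player =
  fixes N T :: nat and Xs :: "nat \<Rightarrow> 'x set" and As :: "nat \<Rightarrow> 'a set"
    and Q1 :: "nat \<Rightarrow> 'x \<Rightarrow> real" and Q :: "('x, 'a) type_kernel" and i :: nat
  assumes finite_Xs: "\<And>j. j \<in> {1..N} \<Longrightarrow> finite (Xs j)"
    and finite_As: "\<And>j. j \<in> {1..N} \<Longrightarrow> finite (As j)"
    and kernels: "kernels N T Xs As Q1 Q"
    and player: "i \<in> {1..N}"
begin

definition others_weight :: "(nat \<Rightarrow> ('x, 'a) player_strategy) \<Rightarrow> nat \<Rightarrow> (nat \<Rightarrow> 'a) list \<Rightarrow> real"
  where "others_weight G n as =
    (\<Prod>j\<in>{1..N}-{i}. \<Sum>xj\<in>nlists n (Xs j). path_weight Q1 Q (G j) j n xj as)"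

definition own_weight :: "('x, 'a) player_strategy \<Rightarrow> nat \<Rightarrow> 'x \<Rightarrow> (nat \<Rightarrow> 'a) list \<Rightarrow> real"
  where "own_weight gi t x h =
    (\<Sum>xi\<in>{xi\<in>nlists t (Xs i). xi ! (t - 1) = x}. path_weight Q1 Q gi i t xi h)"

definition own_action_weight ::
    "('x, 'a) player_strategy \<Rightarrow> nat \<Rightarrow> (nat \<Rightarrow> 'a) list \<Rightarrow> 'x \<Rightarrow> 'a \<Rightarrow> real"
  where "own_action_weight gi t h x a =
    (\<Sum>xi\<in>{xi\<in>nlists t (Xs i). xi ! (t - 1) = x}. path_weight Q1 Q gi i t xi h * gi t h xi a)"

lemma finite_trajectories: "finite (nlists n (profiles N Xs))"
  unfolding profiles_def using finite_Xs by (intro finite_nlists finite_PiE) auto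

lemma sum_pr_x_factor:
  assumes n: "n \<ge> 1"
  shows "(\<Sum>xs\<in>{xs\<in>traj N n Xs. P (player_path i xs)}. pr_x N Q1 Q G n xs as * w (player_path i xs))
       = (\<Sum>xi\<in>{xi\<in>nlists n (Xs i). P xi}. path_weight Q1 Q (G i) i n xi as * w xi) * others_weight G n as"
proof -
  define f where "f j xj = (if j \<noteq> i then path_weight Q1 Q (G j) j n xj as
      else if P xj then path_weight Q1 Q (G i) i n xj as * w xj else 0)" for j xj
  have fin: "finite {1..N}" by simp
  have others: "(\<Prod>j\<in>{1..N}-{i}. f j (player_path j xs))
      = (\<Prod>j\<in>{1..N}-{i}. path_weight Q1 Q (G j) j n (player_path j xs) as)" for xs
    by (rule prod.cong) (auto simp: f_def)
  have pointwise: "(if P (player_path i xs) then pr_x N Q1 Q G n xs as * w (player_path i xs) else 0)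
      = (\<Prod>j\<in>{1..N}. f j (player_path j xs))" if "xs \<in> nlists n (profiles N Xs)" for xs
  proof -
    have "pr_x N Q1 Q G n xs as = path_weight Q1 Q (G i) i n (player_path i xs) as *
        (\<Prod>j\<in>{1..N}-{i}. path_weight Q1 Q (G j) j n (player_path j xs) as)"
      unfolding pr_x_eq_prod_path_weight[OF nlistsE_length[OF that] n] by (rule prod.remove[OF fin player])
    moreover have "(\<Prod>j\<in>{1..N}. f j (player_path j xs)) = f i (player_path i xs) *
        (\<Prod>j\<in>{1..N}-{i}. path_weight Q1 Q (G j) j n (player_path j xs) as)"
      unfolding prod.remove[OF fin player] others ..
    ultimately show ?thesis by (simp add: f_def)
  qed
  have "(\<Sum>xs\<in>{xs\<in>traj N n Xs. P (player_path i xs)}. pr_x N Q1 Q G n xs as * w (player_path i xs))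
      = (\<Sum>xs\<in>nlists n (profiles N Xs).
          if P (player_path i xs) then pr_x N Q1 Q G n xs as * w (player_path i xs) else 0)"
    unfolding traj_eq_nlists by (rule sum.inter_filter[OF finite_trajectories])
  also have "\<dots> = (\<Sum>xs\<in>nlists n (profiles N Xs). \<Prod>j\<in>{1..N}. f j (player_path j xs))"
    by (rule sum.cong[OF refl pointwise])
  also have "\<dots> = (\<Prod>j\<in>{1..N}. \<Sum>xj\<in>nlists n (Xs j). f j xj)"
    by (rule sum_prod_player_paths[OF finite_Xs])
  also have "\<dots> = (\<Sum>xi\<in>nlists n (Xs i). f i xi) * (\<Prod>j\<in>{1..N}-{i}. \<Sum>xj\<in>nlists n (Xs j). f j xj)"
    by (rule prod.remove[OF fin player])
  also have "(\<Sum>xi\<in>nlists n (Xs i). f i xi)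
      = (\<Sum>xi\<in>{xi\<in>nlists n (Xs i). P xi}. path_weight Q1 Q (G i) i n xi as * w xi)"
    unfolding f_def by (simp add: sum.inter_filter[OF finite_nlists[OF finite_Xs[OF player]]])
  also have "(\<Prod>j\<in>{1..N}-{i}. \<Sum>xj\<in>nlists n (Xs j). f j xj) = others_weight G n as"
    unfolding others_weight_def f_def by (intro prod.cong sum.cong) auto
  finally show ?thesis .
qed

lemma cond_den_factor:
  assumes "t \<ge> 1"
  shows "cond_den N Xs Q1 Q G i t h x = own_weight (G i) t x h * others_weight G t h"
proof -
  have "{xs \<in> traj N t Xs. (xs ! (t - 1)) i = x} = {xs \<in> traj N t Xs. player_path i xs ! (t - 1) = x}"
    using assms by (intro Collect_cong) (auto simp: traj_def)
  then show ?thesis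
    using sum_pr_x_factor[OF assms, where P="\<lambda>xi. xi ! (t - 1) = x" and w="\<lambda>_. 1"]
    by (simp add: cond_den_def own_weight_def)
qed

lemma sum_action_profiles_pr_xa:
  assumes G: "strategy_profile N T Xs As G" and t: "t \<in> {1..T}"
    and h: "length h = t - 1" "set h \<subseteq> profiles N As" and a: "a \<in> As i"
    and xs: "xs \<in> traj N t Xs"
  shows "(\<Sum>ap\<in>{ap\<in>profiles N As. ap i = a}. pr_xa N Q1 Q G t xs (h @ [ap]))
       = pr_x N Q1 Q G t xs h * G i t h (player_path i xs) a"
proof -
  have others_sum_one: "(\<Sum>b\<in>As j. G j t h (player_path j xs) b) = 1" if j: "j \<in> {1..N} - {i}" for j
  proof -
    have "player_path j xs \<in> nlists t (Xs j)"
      using xs j by (auto simp: traj_eq_nlists intro: player_path_in_nlists)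
    then have "length (player_path j xs) = t" "set (player_path j xs) \<subseteq> Xs j"
      by (rule nlistsE_length, rule nlistsE_set)
    then show ?thesis
      using G j t h unfolding strategy_profile_def strategy_def by auto
  qed
  have "(\<Sum>ap\<in>{ap\<in>profiles N As. ap i = a}. pr_xa N Q1 Q G t xs (h @ [ap]))
      = pr_x N Q1 Q G t xs h * (\<Sum>ap\<in>{ap\<in>profiles N As. ap i = a}. \<Prod>j\<in>{1..N}. G j t h (player_path j xs) (ap j))"
    using h by (simp add: pr_xa_def nth_append sum_distrib_left)
  also have "(\<Sum>ap\<in>{ap\<in>profiles N As. ap i = a}. \<Prod>j\<in>{1..N}. G j t h (player_path j xs) (ap j))
      = G i t h (player_path i xs) a * (\<Prod>j\<in>{1..N}-{i}. \<Sum>b\<in>As j. G j t h (player_path j xs) b)"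
    unfolding profiles_def using finite_As player a by (intro sum_PiE_fixed_coordinate) auto
  finally show ?thesis by (simp add: others_sum_one)
qed

lemma cond_num_factor:
  assumes G: "strategy_profile N T Xs As G" and t: "t \<in> {1..T}"
    and h: "length h = t - 1" "set h \<subseteq> profiles N As" and a: "a \<in> As i"
  shows "cond_num N Xs As Q1 Q G i t h x a = own_action_weight (G i) t h x a * others_weight G t h"
proof -
  have "{xs \<in> traj N t Xs. (xs ! (t - 1)) i = x} = {xs \<in> traj N t Xs. player_path i xs ! (t - 1) = x}"
    using t by (intro Collect_cong) (auto simp: traj_def)
  then have "cond_num N Xs As Q1 Q G i t h x a
      = (\<Sum>xs\<in>{xs \<in> traj N t Xs. player_path i xs ! (t - 1) = x}. pr_x N Q1 Q G t xs h * G i t h (player_path i xs) a)"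
    unfolding cond_num_def using sum_action_profiles_pr_xa[OF G t h a] by (intro sum.cong) auto
  then show ?thesis
    using sum_pr_x_factor[where n=t and P="\<lambda>xi. xi ! (t - 1) = x" and G=G and as=h and w="\<lambda>xi. G i t h xi a"] t
    by (simp add: own_action_weight_def)
qed

lemma prob_next_factor:
  assumes t: "t \<ge> 1" and y: "y \<in> Xs i"
  shows "prob_next N Xs Q1 Q G i t x y as
       = own_action_weight (G i) t (take (t - 1) as) x ((as ! (t - 1)) i) * Q i (Suc t) x (as ! (t - 1)) y
         * others_weight G (Suc t) as"
proof -
  have "{xs \<in> traj N (t + 1) Xs. (xs ! (t - 1)) i = x \<and> (xs ! t) i = y}
      = {xs \<in> traj N (Suc t) Xs. (\<lambda>xi. xi ! (t - 1) = x \<and> xi ! t = y) (player_path i xs)}"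
    using t by (intro Collect_cong) (auto simp: traj_def)
  then have "prob_next N Xs Q1 Q G i t x y as
      = (\<Sum>xi\<in>{xi\<in>nlists (Suc t) (Xs i). xi ! (t - 1) = x \<and> xi ! t = y}. path_weight Q1 Q (G i) i (Suc t) xi as)
        * others_weight G (Suc t) as"
    using sum_pr_x_factor[where n="Suc t" and P="\<lambda>xi. xi ! (t - 1) = x \<and> xi ! t = y" and G=G and as=as and w="\<lambda>_. 1"]
    by (simp add: prob_next_def)
  also have "{xi\<in>nlists (Suc t) (Xs i). xi ! (t - 1) = x \<and> xi ! t = y}
      = {xi\<in>nlists (Suc t) (Xs i). take t xi ! (t - 1) = x \<and> xi ! t = y}"
    using t by (intro Collect_cong) auto
  also have "(\<Sum>xi\<in>\<dots>. path_weight Q1 Q (G i) i (Suc t) xi as)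
      = (\<Sum>xi\<in>{xi\<in>nlists t (Xs i). xi ! (t - 1) = x}. path_weight Q1 Q (G i) i (Suc t) (xi @ [y]) as)"
    using y by (rule sum_nlists_Suc_last)
  also have "\<dots> = own_action_weight (G i) t (take (t - 1) as) x ((as ! (t - 1)) i) * Q i (Suc t) x (as ! (t - 1)) y"
    unfolding own_action_weight_def sum_distrib_right
    using t by (intro sum.cong) (auto simp: path_weight_snoc path_weight_take)
  finally show ?thesis .
qed

lemma cond_num_div_cond_den:
  assumes "strategy_profile N T Xs As G" "t \<in> {1..T}"
    and "length h = t - 1" "set h \<subseteq> profiles N As" "a \<in> As i"
    and "cond_den N Xs Q1 Q G i t h x > 0"
  shows "cond_num N Xs As Q1 Q G i t h x a / cond_den N Xs Q1 Q G i t h x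
       = own_action_weight (G i) t h x a / own_weight (G i) t x h"
  using assms cond_den_factor[of t G h x] cond_num_factor[OF assms(1-5)] by auto

lemma others_weight_fun_upd [simp]: "others_weight (G(i := gi)) n as = others_weight G n as"
  unfolding others_weight_def by (intro prod.cong sum.cong) auto

lemma others_weight_take: "n - 1 \<le> m \<Longrightarrow> others_weight G n (take m as) = others_weight G n as"
  unfolding others_weight_def by (simp add: path_weight_take)

lemma own_action_weight_lift_restricted:
  assumes "t \<ge> 1"
  shows "own_action_weight (lift_restricted s) t h x a = own_weight (lift_restricted s) t x h * s t h x a"
  unfolding own_action_weight_def own_weight_def sum_distrib_right
proof (intro sum.cong refl)
  fix xi assume "xi \<in> {xi \<in> nlists t (Xs i). xi ! (t - 1) = x}"
  then have "length xi = t" "xi ! (t - 1) = x" by (blast intro: nlistsE_length)+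
  then have "last xi = x" using assms by (subst last_conv_nth) auto
  then show "path_weight Q1 Q (lift_restricted s) i t xi h * lift_restricted s t h xi a
      = path_weight Q1 Q (lift_restricted s) i t xi h * s t h x a"
    by (simp add: lift_restricted_def)
qed

lemma path_weight_nonneg_profile:
  assumes "strategy_profile N T Xs As G" "j \<in> {1..N}" "xj \<in> nlists n (Xs j)"
    and "1 \<le> n" "n \<le> T + 1" "n - 1 \<le> length as" "set as \<subseteq> profiles N As"
  shows "path_weight Q1 Q (G j) j n xj as \<ge> 0"
  using assms path_weight_nonneg[OF kernels] unfolding strategy_profile_def by blast

lemma others_weight_nonneg:
  assumes "strategy_profile N T Xs As G" "1 \<le> n" "n \<le> T + 1" "n - 1 \<le> length as" "set as \<subseteq> profiles N As"
  shows "others_weight G n as \<ge> 0"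
  unfolding others_weight_def using assms
  by (intro prod_nonneg sum_nonneg ballI path_weight_nonneg_profile) auto

lemma own_weight_nonneg:
  assumes "strategy_profile N T Xs As G" "1 \<le> t" "t \<le> T + 1" "t - 1 \<le> length h" "set h \<subseteq> profiles N As"
  shows "own_weight (G i) t x h \<ge> 0"
  unfolding own_weight_def using assms player
  by (intro sum_nonneg path_weight_nonneg_profile) auto

lemma others_weight_Suc_eq_0:
  assumes G: "strategy_profile N T Xs As G" and t: "t \<in> {1..T}"
    and as: "t \<le> length as" "set as \<subseteq> profiles N As"
    and zero: "others_weight G t as = 0"
  shows "others_weight G (Suc t) as = 0"
proof -
  have "\<exists>j\<in>{1..N} - {i}. (\<Sum>xj\<in>nlists t (Xs j). path_weight Q1 Q (G j) j t xj as) = 0"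
    using zero unfolding others_weight_def by (simp add: prod_zero_iff)
  then obtain j where j: "j \<in> {1..N} - {i}" and "(\<Sum>xj\<in>nlists t (Xs j). path_weight Q1 Q (G j) j t xj as) = 0"
    by blast
  then have vanish: "path_weight Q1 Q (G j) j t xj as = 0" if "xj \<in> nlists t (Xs j)" for xj
    using that t as finite_nlists[OF finite_Xs] path_weight_nonneg_profile[OF G]
    by (subst (asm) sum_nonneg_eq_0_iff) auto
  have "path_weight Q1 Q (G j) j (Suc t) xj as = 0" if xj: "xj \<in> nlists (Suc t) (Xs j)" for xj
  proof -
    have len: "length xj = Suc t" using xj by (rule nlistsE_length)
    then have "xj = take t xj @ [xj ! t]" by (simp add: take_Suc_conv_app_nth[symmetric])
    moreover have "take t xj \<in> nlists t (Xs j)"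
      using len nlistsE_set[OF xj] by (intro nlistsI) (auto dest: in_set_takeD)
    ultimately show ?thesis
      using t vanish path_weight_snoc[of "take t xj" t Q1 Q "G j" j "xj ! t" as] len by auto
  qed
  then show ?thesis
    unfolding others_weight_def using j by (intro prod_zero bexI[of _ j]) auto
qed

lemma own_action_weight_eq_0:
  assumes G: "strategy_profile N T Xs As G" and t: "t \<in> {1..T}"
    and h: "length h = t - 1" "set h \<subseteq> profiles N As"
    and zero: "own_weight (G i) t x h = 0"
  shows "own_action_weight (G i) t h x a = 0"
proof -
  have "path_weight Q1 Q (G i) i t xi h = 0" if "xi \<in> {xi\<in>nlists t (Xs i). xi ! (t - 1) = x}" for xi
    using zero that t h finite_nlists[OF finite_Xs[OF player]] path_weight_nonneg_profile[OF G player]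
    unfolding own_weight_def by (subst (asm) sum_nonneg_eq_0_iff) auto
  then show ?thesis unfolding own_action_weight_def by simp
qed

lemma cond_den_Suc:
  assumes "t \<ge> 1"
  shows "cond_den N Xs Q1 Q G i (Suc t) as y = (\<Sum>x\<in>Xs i. prob_next N Xs Q1 Q G i t x y as)"
proof -
  define S where "S = {xs \<in> traj N (Suc t) Xs. (xs ! t) i = y}"
  have "finite S"
    unfolding S_def traj_eq_nlists using finite_trajectories by simp
  moreover have "(\<lambda>xs. (xs ! (t - 1)) i) ` S \<subseteq> Xs i"
  proof
    fix z assume "z \<in> (\<lambda>xs. (xs ! (t - 1)) i) ` S"
    then obtain xs where xs: "xs \<in> traj N (Suc t) Xs" and z: "z = (xs ! (t - 1)) i"
      unfolding S_def by blast
    from xs have "xs ! (t - 1) \<in> profiles N Xs"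
      unfolding traj_eq_nlists by (rule nlistsE_nth_in) simp
    then show "z \<in> Xs i" using player z by (auto simp: profiles_def)
  qed
  ultimately have "(\<Sum>x\<in>Xs i. \<Sum>xs\<in>{xs \<in> S. (xs ! (t - 1)) i = x}. pr_x N Q1 Q G (Suc t) xs as)
      = (\<Sum>xs\<in>S. pr_x N Q1 Q G (Suc t) xs as)"
    by (intro sum.group finite_Xs player)
  moreover have "{xs \<in> S. (xs ! (t - 1)) i = x}
      = {xs \<in> traj N (t + 1) Xs. (xs ! (t - 1)) i = x \<and> (xs ! t) i = y}" for x
    unfolding S_def by auto
  ultimately show ?thesis
    by (simp add: cond_den_def prob_next_def S_def)
qed

definition cond_action_law ::
    "(nat \<Rightarrow> ('x, 'a) player_strategy) \<Rightarrow> (nat \<Rightarrow> (nat \<Rightarrow> 'a) list \<Rightarrow> 'x \<Rightarrow> 'a \<Rightarrow> real) \<Rightarrow> bool"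
  where "cond_action_law g s \<longleftrightarrow>
    (\<forall>t\<in>{1..T}. \<forall>h x a. length h = t - 1 \<and> set h \<subseteq> profiles N As \<and> x \<in> Xs i \<and> a \<in> As i
       \<and> cond_den N Xs Q1 Q g i t h x > 0 \<longrightarrow>
       s t h x a = cond_num N Xs As Q1 Q g i t h x a / cond_den N Xs Q1 Q g i t h x)"

lemma own_action_weight_lift_restricted_eq:
  assumes g: "strategy_profile N T Xs As g" and s: "cond_action_law g s" and t: "t \<in> {1..T}"
    and h: "length h = t - 1" "set h \<subseteq> profiles N As" and x: "x \<in> Xs i" and a: "a \<in> As i"
    and den_eq: "cond_den N Xs Q1 Q (g(i := lift_restricted s)) i t h x = cond_den N Xs Q1 Q g i t h x"
  shows "own_action_weight (lift_restricted s) t h x a * others_weight g t h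
       = own_action_weight (g i) t h x a * others_weight g t h"
proof (cases "others_weight g t h = 0")
  case False
  have t1: "t \<ge> 1" using t by simp
  have others_pos: "others_weight g t h > 0"
    using False others_weight_nonneg[OF g t1 _ _ h(2)] t h(1) by fastforce
  have own_eq: "own_weight (lift_restricted s) t x h = own_weight (g i) t x h"
    using den_eq cond_den_factor[OF t1] False by simp
  show ?thesis
  proof (cases "own_weight (g i) t x h = 0")
    case True
    then show ?thesis
      using own_eq own_action_weight_eq_0[OF g t h True] own_action_weight_lift_restricted[OF t1] by simp
  next
    case False
    moreover have "own_weight (g i) t x h \<ge> 0"
      using own_weight_nonneg[OF g t1 _ _ h(2)] t h(1) by simp
    ultimately have "cond_den N Xs Q1 Q g i t h x > 0"
      using cond_den_factor[OF t1] others_pos by simp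
    then have "s t h x a = own_action_weight (g i) t h x a / own_weight (g i) t x h"
      using s t h x a cond_num_div_cond_den[OF g t h a] unfolding cond_action_law_def by simp
    then show ?thesis using own_eq False own_action_weight_lift_restricted[OF t1] by simp
  qed
qed simp

lemma prob_next_lift_restricted_eq:
  assumes g: "strategy_profile N T Xs As g" and s: "cond_action_law g s" and t: "t \<in> {1..T}"
    and as: "length as = t" "set as \<subseteq> profiles N As" and x: "x \<in> Xs i" and y: "y \<in> Xs i"
    and den_eq: "cond_den N Xs Q1 Q (g(i := lift_restricted s)) i t (take (t - 1) as) x
      = cond_den N Xs Q1 Q g i t (take (t - 1) as) x"
  shows "prob_next N Xs Q1 Q (g(i := lift_restricted s)) i t x y as = prob_next N Xs Q1 Q g i t x y as"
proof -
  define h a where "h = take (t - 1) as" and "a = (as ! (t - 1)) i"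
  have t1: "t \<ge> 1" using t by simp
  have h: "length h = t - 1" "set h \<subseteq> profiles N As"
    using as by (auto simp: h_def dest: in_set_takeD)
  have "as ! (t - 1) \<in> profiles N As" using as t1 by (auto intro: nth_mem)
  then have a: "a \<in> As i" using player by (auto simp: a_def profiles_def)
  have others_Suc: "others_weight g (Suc t) as = 0" if "others_weight g t h = 0"
    using that others_weight_Suc_eq_0[OF g t] as others_weight_take[of t "t - 1" g as] by (simp add: h_def)
  have "own_action_weight (lift_restricted s) t h x a * others_weight g (Suc t) as
      = own_action_weight (g i) t h x a * others_weight g (Suc t) as"
    using own_action_weight_lift_restricted_eq[OF g s t h x a den_eq[folded h_def]] others_Suc
    by (cases "others_weight g t h = 0") simp_all
  then show ?thesis
    unfolding prob_next_factor[OF t1 y] h_def a_def by (auto simp: ac_simps)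
qed

lemma cond_den_lift_restricted_eq:
  assumes g: "strategy_profile N T Xs As g" and s: "cond_action_law g s"
  shows "t \<in> {1..T} \<Longrightarrow> length h = t - 1 \<Longrightarrow> set h \<subseteq> profiles N As \<Longrightarrow> x \<in> Xs i \<Longrightarrow>
    cond_den N Xs Q1 Q (g(i := lift_restricted s)) i t h x = cond_den N Xs Q1 Q g i t h x"
proof (induction t arbitrary: h x)
  case (Suc t)
  show ?case
  proof (cases "t = 0")
    case True
    show ?thesis unfolding True by (rule cond_den_Suc_0_strategy_independent)
  next
    case False
    then have t: "t \<in> {1..T}" and t1: "t \<ge> 1" and h: "length h = t" "set h \<subseteq> profiles N As"
      using Suc.prems by auto
    have "prob_next N Xs Q1 Q (g(i := lift_restricted s)) i t x' x h = prob_next N Xs Q1 Q g i t x' x h"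
      if x': "x' \<in> Xs i" for x'
      using t h x' Suc.prems(4)
      by (intro prob_next_lift_restricted_eq[OF g s] Suc.IH) (auto dest: in_set_takeD)
    then show ?thesis
      unfolding cond_den_Suc[OF t1] by (intro sum.cong refl) auto
  qed
qed simp

lemma prob_next_lift_restricted:
  assumes "strategy_profile N T Xs As g" "cond_action_law g s" "t \<in> {1..T}"
    and "length as = t" "set as \<subseteq> profiles N As" "x \<in> Xs i" "y \<in> Xs i"
  shows "prob_next N Xs Q1 Q (g(i := lift_restricted s)) i t x y as = prob_next N Xs Q1 Q g i t x y as"
  using assms by (intro prob_next_lift_restricted_eq cond_den_lift_restricted_eq) (auto dest: in_set_takeD)

end

theorem claim3:
  fixes N T :: nat and i :: nat
    and Xs :: "nat \<Rightarrow> 'x set" and As :: "nat \<Rightarrow> 'a set"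
    and Q1 :: "nat \<Rightarrow> 'x \<Rightarrow> real"
    and Q :: "nat \<Rightarrow> nat \<Rightarrow> 'x \<Rightarrow> (nat \<Rightarrow> 'a) \<Rightarrow> 'x \<Rightarrow> real"
    and g :: "nat \<Rightarrow> nat \<Rightarrow> (nat \<Rightarrow> 'a) list \<Rightarrow> 'x list \<Rightarrow> 'a \<Rightarrow> real"
    and s :: "nat \<Rightarrow> (nat \<Rightarrow> 'a) list \<Rightarrow> 'x \<Rightarrow> 'a \<Rightarrow> real"
  assumes fin: "\<forall>j\<in>{1..N}. finite (Xs j) \<and> Xs j \<noteq> {} \<and> finite (As j) \<and> As j \<noteq> {}"
    and ker: "kernels N T Xs As Q1 Q"
    and prof: "strategy_profile N T Xs As g"
    and i: "i \<in> {1..N}"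
    and s_strat: "restricted_strategy N T Xs As i s"
    and s_def: "\<forall>t\<in>{1..T}. \<forall>h x a. length h = t - 1 \<and> set h \<subseteq> profiles N As \<and> x \<in> Xs i \<and> a \<in> As i
                  \<and> cond_den N Xs Q1 Q g i t h x > 0 \<longrightarrow>
                  s t h x a = cond_num N Xs As Q1 Q g i t h x a / cond_den N Xs Q1 Q g i t h x"
  shows "(\<forall>g'. strategy_profile N T Xs As g' \<and> g' i = g i \<longrightarrow>
            (\<forall>t\<in>{1..T}. \<forall>h x a. length h = t - 1 \<and> set h \<subseteq> profiles N As \<and> x \<in> Xs i \<and> a \<in> As i
               \<and> cond_den N Xs Q1 Q g i t h x > 0 \<and> cond_den N Xs Q1 Q g' i t h x > 0 \<longrightarrow>
               cond_num N Xs As Q1 Q g' i t h x a / cond_den N Xs Q1 Q g' i t h x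
                 = cond_num N Xs As Q1 Q g i t h x a / cond_den N Xs Q1 Q g i t h x))
       \<and> (\<forall>t\<in>{1..T}. \<forall>x\<in>Xs i. \<forall>y\<in>Xs i. \<forall>as. length as = t \<and> set as \<subseteq> profiles N As \<longrightarrow>
            prob_next N Xs Q1 Q (g(i := lift_restricted s)) i t x y as
              = prob_next N Xs Q1 Q g i t x y as)"
proof -
  interpret game_player N T Xs As Q1 Q i
    using fin ker i by unfold_locales auto
  have s: "cond_action_law g s"
    using s_def unfolding cond_action_law_def .
  show ?thesis
  proof (intro conjI allI ballI impI)
    fix g' t h x a
    assume "strategy_profile N T Xs As g' \<and> g' i = g i" and "t \<in> {1..T}"
      and "length h = t - 1 \<and> set h \<subseteq> profiles N As \<and> x \<in> Xs i \<and> a \<in> As i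
        \<and> cond_den N Xs Q1 Q g i t h x > 0 \<and> cond_den N Xs Q1 Q g' i t h x > 0"
    then show "cond_num N Xs As Q1 Q g' i t h x a / cond_den N Xs Q1 Q g' i t h x
        = cond_num N Xs As Q1 Q g i t h x a / cond_den N Xs Q1 Q g i t h x"
      using cond_num_div_cond_den[of g' t h a x] cond_num_div_cond_den[OF prof, of t h a x] by simp
  qed (use prob_next_lift_restricted[OF prof s] in simp)
qed

end
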